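(* Let $R$ be a commutative Noetherian ring and $\alpha$ an automorphism of $R$ such that $R$ is $\alpha$-special, with $a$ an $\alpha$-special element. Let $S=R[\theta;\alpha]$. Then $(1-a\theta)S$ is a maximal right ideal of $S$. If in addition $\alpha$ has infinite order, then $S/(1-a\theta)S$ is a faithful simple right $S$-module.
   Context: $R[\theta;\alpha]$: skew polynomial ring with $\theta r=\alpha(r)\theta$. An ideal $I$ is $\alpha$-stable if $\alpha(I)=I$. For $a\in R$ and $n\ge1$ put $N_n^\alpha(a)=a\alpha(a)\cdots\alpha^{n-1}(a)$. $R$ is $\alpha$-special if there is $a\in R$ (an $\alpha$-special element) with $N_n^\alpha(a)\neq0$ for all $n\ge1$ and such that every nonzero $\alpha$-stable ideal of $R$ contains $N_n^\alpha(a)$ for some $n\ge1$. *)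

theory Defs
  imports "HOL-Computational_Algebra.Polynomial"
begin

definition r_ideal :: "'a::comm_ring_1 set \<Rightarrow> bool" where
  "r_ideal I \<longleftrightarrow> 0 \<in> I \<and> (\<forall>x\<in>I. \<forall>y\<in>I. x + y \<in> I) \<and> (\<forall>x\<in>I. - x \<in> I)
     \<and> (\<forall>r. \<forall>x\<in>I. r * x \<in> I)"

definition noetherian_ring :: "'a::comm_ring_1 itself \<Rightarrow> bool" where
  "noetherian_ring _ \<longleftrightarrow>
     (\<forall>C :: nat \<Rightarrow> 'a set. (\<forall>n. r_ideal (C n)) \<and> (\<forall>n. C n \<subseteq> C (Suc n))
        \<longrightarrow> (\<exists>N. \<forall>n\<ge>N. C n = C N))"

definition ring_automorphism :: "('a::comm_ring_1 \<Rightarrow> 'a) \<Rightarrow> bool" where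
  "ring_automorphism \<alpha> \<longleftrightarrow> bij \<alpha> \<and> (\<forall>x y. \<alpha> (x + y) = \<alpha> x + \<alpha> y)
     \<and> (\<forall>x y. \<alpha> (x * y) = \<alpha> x * \<alpha> y) \<and> \<alpha> 1 = 1"

definition alpha_stable :: "('a \<Rightarrow> 'a) \<Rightarrow> 'a set \<Rightarrow> bool" where
  "alpha_stable \<alpha> I \<longleftrightarrow> \<alpha> ` I = I"

definition normN :: "('a::comm_ring_1 \<Rightarrow> 'a) \<Rightarrow> nat \<Rightarrow> 'a \<Rightarrow> 'a" where
  "normN \<alpha> n a = (\<Prod>i<n. (\<alpha> ^^ i) a)"

definition alpha_special_element :: "('a::comm_ring_1 \<Rightarrow> 'a) \<Rightarrow> 'a \<Rightarrow> bool" where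
  "alpha_special_element \<alpha> a \<longleftrightarrow>
     (\<forall>n\<ge>1. normN \<alpha> n a \<noteq> 0) \<and>
     (\<forall>I. r_ideal I \<and> alpha_stable \<alpha> I \<and> I \<noteq> {0} \<longrightarrow> (\<exists>n\<ge>1. normN \<alpha> n a \<in> I))"

text \<open>Elements of S are written sum r_i theta^i with left coefficients; as an additive
  group S is the polynomial group 'a poly (coefficient i = r_i), and the multiplication is
  twisted by theta r = alpha(r) theta, i.e. (r theta^i)(s theta^j) = r alpha^i(s) theta^(i+j).\<close>
definition skew_mult :: "('a::comm_ring_1 \<Rightarrow> 'a) \<Rightarrow> 'a poly \<Rightarrow> 'a poly \<Rightarrow> 'a poly" where
  "skew_mult \<alpha> p q =
     (\<Sum>i\<le>degree p. \<Sum>j\<le>degree q. monom (coeff p i * (\<alpha> ^^ i) (coeff q j)) (i + j))"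

definition theta :: "'a::comm_ring_1 poly" where
  "theta = monom 1 1"

definition right_ideal :: "('a::comm_ring_1 \<Rightarrow> 'a) \<Rightarrow> 'a poly set \<Rightarrow> bool" where
  "right_ideal \<alpha> I \<longleftrightarrow> 0 \<in> I \<and> (\<forall>x\<in>I. \<forall>y\<in>I. x + y \<in> I) \<and> (\<forall>x\<in>I. - x \<in> I)
     \<and> (\<forall>x\<in>I. \<forall>s. skew_mult \<alpha> x s \<in> I)"

definition principal_right_ideal :: "('a::comm_ring_1 \<Rightarrow> 'a) \<Rightarrow> 'a poly \<Rightarrow> 'a poly set" where
  "principal_right_ideal \<alpha> p = range (skew_mult \<alpha> p)"

definition maximal_right_ideal :: "('a::comm_ring_1 \<Rightarrow> 'a) \<Rightarrow> 'a poly set \<Rightarrow> bool" where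
  "maximal_right_ideal \<alpha> M \<longleftrightarrow> right_ideal \<alpha> M \<and> M \<noteq> UNIV \<and>
     (\<forall>J. right_ideal \<alpha> J \<and> M \<subseteq> J \<longrightarrow> J = M \<or> J = UNIV)"

definition coset :: "'a::comm_ring_1 poly set \<Rightarrow> 'a poly \<Rightarrow> 'a poly set" where
  "coset M x = (\<lambda>m. x + m) ` M"

definition quot_mod :: "'a::comm_ring_1 poly set \<Rightarrow> 'a poly set set" where
  "quot_mod M = range (coset M)"

definition quot_add :: "'a::comm_ring_1 poly set \<Rightarrow> 'a poly set \<Rightarrow> 'a poly set" where
  "quot_add C D = {c + d | c d. c \<in> C \<and> d \<in> D}"

definition quot_neg :: "'a::comm_ring_1 poly set \<Rightarrow> 'a poly set" where
  "quot_neg C = uminus ` C"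

definition quot_act :: "('a::comm_ring_1 \<Rightarrow> 'a) \<Rightarrow> 'a poly set \<Rightarrow> 'a poly set \<Rightarrow> 'a poly \<Rightarrow> 'a poly set" where
  "quot_act \<alpha> M C s = {skew_mult \<alpha> c s + m | c m. c \<in> C \<and> m \<in> M}"

definition quot_submodule :: "('a::comm_ring_1 \<Rightarrow> 'a) \<Rightarrow> 'a poly set \<Rightarrow> 'a poly set set \<Rightarrow> bool" where
  "quot_submodule \<alpha> M N \<longleftrightarrow> N \<subseteq> quot_mod M \<and> M \<in> N \<and>
     (\<forall>C\<in>N. \<forall>D\<in>N. quot_add C D \<in> N) \<and> (\<forall>C\<in>N. quot_neg C \<in> N) \<and>
     (\<forall>C\<in>N. \<forall>s. quot_act \<alpha> M C s \<in> N)"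

definition quot_simple :: "('a::comm_ring_1 \<Rightarrow> 'a) \<Rightarrow> 'a poly set \<Rightarrow> bool" where
  "quot_simple \<alpha> M \<longleftrightarrow> quot_mod M \<noteq> {M} \<and>
     (\<forall>N. quot_submodule \<alpha> M N \<longrightarrow> N = {M} \<or> N = quot_mod M)"

definition quot_faithful :: "('a::comm_ring_1 \<Rightarrow> 'a) \<Rightarrow> 'a poly set \<Rightarrow> bool" where
  "quot_faithful \<alpha> M \<longleftrightarrow> (\<forall>s. (\<forall>C\<in>quot_mod M. quot_act \<alpha> M C s = M) \<longrightarrow> s = 0)"

end

theory Submission
  imports Defs
begin

text \<open>Write \<open>M = (1 - a\<theta>)S\<close>. Modulo \<open>M\<close> one has \<open>y\<theta>\<^sup>d \<equiv> a\<alpha>(y)\<theta>\<^sup>d\<^sup>+\<^sup>1\<close>, so every \<open>f\<close> of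
  degree at most \<open>d\<close> is congruent to a single term \<open>c\<theta>\<^sup>d\<close>, and \<open>f \<in> M\<close> iff \<open>c = 0\<close> for large \<open>d\<close>.
  Call an ideal \<open>I\<close> of \<open>R\<close> saturated if \<open>a\<alpha>(y) \<in> I\<close> implies \<open>y \<in> I\<close>. Then \<open>I \<subseteq> \<alpha>(I)\<close>, so by the
  Noetherian property \<open>I\<close> is \<open>\<alpha>\<close>-stable; if \<open>I \<noteq> 0\<close> it contains some \<open>N\<^sub>n(a) = a\<alpha>(N\<^sub>n\<^sub>-\<^sub>1(a))\<close> and
  hence \<open>1\<close>. Applied to the annihilator of all \<open>N\<^sub>m(a)\<alpha>\<^sup>m\<close>, this shows that \<open>a\<close> is regular.

  If \<open>J \<supset> M\<close> is a right ideal, the ideals \<open>{y. y\<theta>\<^sup>d \<in> J}\<close> increase with \<open>d\<close> and stabilise at a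
  saturated nonzero ideal, which therefore contains \<open>1\<close>; pulling \<open>\<theta>\<^sup>d\<close> back gives \<open>1 \<in> J\<close>.
  For faithfulness, a nonzero \<open>s\<close> of least degree \<open>e\<close> in the annihilator of \<open>S/M\<close> commutes with
  \<open>R\<close> up to \<open>\<alpha>\<^sup>e\<close>, so its coefficients satisfy \<open>s\<^sub>i(\<alpha>\<^sup>e(r) - \<alpha>\<^sup>i(r)) = 0\<close>; as \<open>s \<in> M\<close>, some
  \<open>s\<^sub>i\<close> with \<open>i < e\<close> is nonzero, and the saturated annihilator of the \<open>\<alpha>\<^sup>e(r) - \<alpha>\<^sup>i(r)\<close> then
  forces \<open>\<alpha>\<^sup>e\<^sup>-\<^sup>i = id\<close>.\<close>

section \<open>Arithmetic in the skew polynomial ring\<close>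

lemma sum_diagonal_restrict:
  fixes c :: "nat \<Rightarrow> nat \<Rightarrow> 'a::comm_monoid_add"
  assumes "\<And>i j. i > m \<Longrightarrow> c i j = 0" and "\<And>i j. j > k \<Longrightarrow> c i j = 0"
  shows "(\<Sum>i\<le>m. \<Sum>j\<le>k. if i + j = n then c i j else 0) = (\<Sum>i\<le>n. c i (n - i))"
proof -
  have inner: "(\<Sum>j\<le>k. if i + j = n then c i j else 0) = (if i \<le> n then c i (n - i) else 0)" for i
  proof (cases "i \<le> n \<and> n - i \<le> k")
    case True
    then have "(\<Sum>j\<le>k. if i + j = n then c i j else 0) = (\<Sum>j\<le>k. if j = n - i then c i (n - i) else 0)"
      by (intro sum.cong) auto
    then show ?thesis using True by simp
  next
    case False
    then show ?thesis using assms(2)[of "n - i" i] by (auto intro!: sum.neutral)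
  qed
  have "(\<Sum>i\<le>m. if i \<le> n then c i (n - i) else 0) = (\<Sum>i\<le>max m n. if i \<le> n then c i (n - i) else 0)"
    by (rule sum.mono_neutral_left) (auto simp: assms(1))
  also have "\<dots> = (\<Sum>i\<le>n. c i (n - i))"
    by (rule sum.mono_neutral_cong_right) auto
  finally show ?thesis by (simp add: inner)
qed

locale skew_poly_ring =
  fixes \<alpha> :: "'a::comm_ring_1 \<Rightarrow> 'a"
  assumes automorphism: "ring_automorphism \<alpha>"
begin

lemma alpha_add [simp]: "\<alpha> (x + y) = \<alpha> x + \<alpha> y"
  and alpha_mult [simp]: "\<alpha> (x * y) = \<alpha> x * \<alpha> y"
  and alpha_1 [simp]: "\<alpha> 1 = 1"
  and bij_alpha: "bij \<alpha>"
  using automorphism unfolding ring_automorphism_def by blast+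

lemma alpha_0 [simp]: "\<alpha> 0 = 0"
  using alpha_add[of 0 0] by simp

lemma alpha_minus [simp]: "\<alpha> (- x) = - \<alpha> x"
  using alpha_add[of x "- x"] by (metis add.right_inverse alpha_0 neg_eq_iff_add_eq_0)

lemma alpha_diff [simp]: "\<alpha> (x - y) = \<alpha> x - \<alpha> y"
  using alpha_add[of x "- y"] by simp

lemma alpha_pow_add [simp]: "(\<alpha> ^^ n) (x + y) = (\<alpha> ^^ n) x + (\<alpha> ^^ n) y"
  and alpha_pow_mult [simp]: "(\<alpha> ^^ n) (x * y) = (\<alpha> ^^ n) x * (\<alpha> ^^ n) y"
  and alpha_pow_1 [simp]: "(\<alpha> ^^ n) 1 = 1"
  and alpha_pow_0 [simp]: "(\<alpha> ^^ n) 0 = 0"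
  and alpha_pow_minus [simp]: "(\<alpha> ^^ n) (- x) = - (\<alpha> ^^ n) x"
  and alpha_pow_diff [simp]: "(\<alpha> ^^ n) (x - y) = (\<alpha> ^^ n) x - (\<alpha> ^^ n) y"
  by (induct n) simp_all

lemma alpha_pow_alpha_pow [simp]: "(\<alpha> ^^ m) ((\<alpha> ^^ n) x) = (\<alpha> ^^ (m + n)) x"
  by (simp add: funpow_add)

lemma alpha_pow_sum: "(\<alpha> ^^ n) (\<Sum>i\<in>A. f i) = (\<Sum>i\<in>A. (\<alpha> ^^ n) (f i))"
  by (induct A rule: infinite_finite_induct) simp_all

lemma bij_alpha_pow: "bij (\<alpha> ^^ n)"
  using bij_alpha by (rule bij_betw_funpow)

lemma alpha_pow_eq_iff [simp]: "(\<alpha> ^^ n) x = (\<alpha> ^^ n) y \<longleftrightarrow> x = y"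
  using bij_alpha_pow bij_is_inj inj_eq by metis

lemma alpha_pow_surj: obtains y where "x = (\<alpha> ^^ n) y"
  using bij_alpha_pow by (metis bij_pointE)

lemma normN_0 [simp]: "normN \<alpha> 0 b = 1"
  and normN_Suc: "normN \<alpha> (Suc n) b = normN \<alpha> n b * (\<alpha> ^^ n) b"
  and normN_Suc_0 [simp]: "normN \<alpha> (Suc 0) b = b"
  by (simp_all add: normN_def)

lemma normN_add: "normN \<alpha> (m + n) b = normN \<alpha> m b * (\<alpha> ^^ m) (normN \<alpha> n b)"
  by (induct n) (simp_all add: normN_Suc mult.assoc)

lemma normN_Suc': "normN \<alpha> (Suc n) b = b * \<alpha> (normN \<alpha> n b)"
  using normN_add[of 1 n b] by simp

lemma r_ideal_image:
  assumes "r_ideal I"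
  shows "r_ideal ((\<alpha> ^^ n) ` I)"
  unfolding r_ideal_def
proof (intro conjI ballI allI)
  show "0 \<in> (\<alpha> ^^ n) ` I"
    using assms alpha_pow_0 unfolding r_ideal_def by (metis image_eqI)
next
  fix x y assume "x \<in> (\<alpha> ^^ n) ` I" "y \<in> (\<alpha> ^^ n) ` I"
  then obtain u v where "u \<in> I" "v \<in> I" "x = (\<alpha> ^^ n) u" "y = (\<alpha> ^^ n) v" by auto
  then show "x + y \<in> (\<alpha> ^^ n) ` I"
    using assms unfolding r_ideal_def by (metis alpha_pow_add image_eqI)
next
  fix x assume "x \<in> (\<alpha> ^^ n) ` I"
  then obtain u where "u \<in> I" "x = (\<alpha> ^^ n) u" by auto
  then show "- x \<in> (\<alpha> ^^ n) ` I"
    using assms unfolding r_ideal_def by (metis alpha_pow_minus image_eqI)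
next
  fix r x assume "x \<in> (\<alpha> ^^ n) ` I"
  then obtain u where "u \<in> I" "x = (\<alpha> ^^ n) u" by auto
  moreover obtain s where "r = (\<alpha> ^^ n) s" by (rule alpha_pow_surj)
  ultimately show "r * x \<in> (\<alpha> ^^ n) ` I"
    using assms unfolding r_ideal_def by (metis alpha_pow_mult image_eqI)
qed

text \<open>The chain \<open>I \<subseteq> \<alpha>(I) \<subseteq> \<alpha>\<^sup>2(I) \<subseteq> \<dots>\<close> stabilises, and \<open>\<alpha>\<close> is injective.\<close>
lemma alpha_stable_if_subset_image:
  assumes "noetherian_ring TYPE('a)" and I: "r_ideal I" and sub: "I \<subseteq> \<alpha> ` I"
  shows "alpha_stable \<alpha> I"
proof -
  define C where "C n = (\<alpha> ^^ n) ` I" for n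
  have "r_ideal (C n)" for n
    unfolding C_def using I by (rule r_ideal_image)
  moreover have C_Suc: "C (Suc n) = (\<alpha> ^^ n) ` (\<alpha> ` I)" for n
    unfolding C_def by (simp only: funpow_Suc_right image_comp)
  then have "C n \<subseteq> C (Suc n)" for n
    using sub unfolding C_def by (simp add: image_mono)
  ultimately obtain N where "\<forall>n\<ge>N. C n = C N"
    using assms(1) unfolding noetherian_ring_def by blast
  then have "(\<alpha> ^^ N) ` (\<alpha> ` I) = (\<alpha> ^^ N) ` I"
    using C_Suc[of N] unfolding C_def by (metis le_SucI order_refl)
  then show ?thesis
    unfolding alpha_stable_def using bij_alpha_pow[of N] by (simp add: bij_is_inj inj_image_eq_iff)
qed

lemma coeff_skew_mult:
  "coeff (skew_mult \<alpha> p q) n = (\<Sum>i\<le>n. coeff p i * (\<alpha> ^^ i) (coeff q (n - i)))"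
  unfolding skew_mult_def coeff_sum coeff_monom
  by (rule sum_diagonal_restrict) (auto simp: coeff_eq_0)

lemma skew_mult_add_left: "skew_mult \<alpha> (p + q) r = skew_mult \<alpha> p r + skew_mult \<alpha> q r"
  and skew_mult_add_right: "skew_mult \<alpha> r (p + q) = skew_mult \<alpha> r p + skew_mult \<alpha> r q"
  and skew_mult_minus_right: "skew_mult \<alpha> r (- p) = - skew_mult \<alpha> r p"
  and skew_mult_diff_right: "skew_mult \<alpha> r (p - q) = skew_mult \<alpha> r p - skew_mult \<alpha> r q"
  and skew_mult_0_right: "skew_mult \<alpha> r 0 = 0"
  by (rule poly_eqI; simp add: coeff_skew_mult algebra_simps sum.distrib sum_negf sum_subtractf)+

lemma coeff_skew_mult_monom_left:
  "coeff (skew_mult \<alpha> (monom c d) r) n = (if d \<le> n then c * (\<alpha> ^^ d) (coeff r (n - d)) else 0)"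
proof -
  have "coeff (skew_mult \<alpha> (monom c d) r) n = (\<Sum>i\<le>n. if i = d then c * (\<alpha> ^^ d) (coeff r (n - d)) else 0)"
    unfolding coeff_skew_mult by (intro sum.cong refl) (auto simp: coeff_monom)
  then show ?thesis by simp
qed

lemma coeff_skew_mult_const_right: "coeff (skew_mult \<alpha> r (monom c 0)) n = coeff r n * (\<alpha> ^^ n) c"
proof -
  have "coeff (skew_mult \<alpha> r (monom c 0)) n = (\<Sum>i\<le>n. if i = n then coeff r n * (\<alpha> ^^ n) c else 0)"
    unfolding coeff_skew_mult by (intro sum.cong refl) (auto simp: coeff_monom)
  then show ?thesis by simp
qed

lemma skew_mult_1_left [simp]: "skew_mult \<alpha> 1 r = r"
  by (rule poly_eqI) (simp add: coeff_skew_mult_monom_left flip: monom_eq_1)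

lemma skew_mult_monom_monom: "skew_mult \<alpha> (monom x i) (monom y j) = monom (x * (\<alpha> ^^ i) y) (i + j)"
  by (rule poly_eqI) (auto simp: coeff_skew_mult_monom_left coeff_monom)

lemma skew_mult_assoc: "skew_mult \<alpha> (skew_mult \<alpha> p q) r = skew_mult \<alpha> p (skew_mult \<alpha> q r)"
proof (rule poly_eqI)
  fix n
  define H where "H i j = coeff p i * (\<alpha> ^^ i) (coeff q j) * (\<alpha> ^^ (i + j)) (coeff r (n - (i + j)))" for i j
  have "coeff (skew_mult \<alpha> (skew_mult \<alpha> p q) r) n = (\<Sum>k\<le>n. \<Sum>i\<le>k. H i (k - i))"
    unfolding coeff_skew_mult sum_distrib_right by (intro sum.cong refl) (simp add: H_def)
  also have "\<dots> = (\<Sum>(i, j)\<in>{(i, j). i + j \<le> n}. H i j)"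
    by (rule sum.triangle_reindex_eq[symmetric])
  also have "{(i, j). i + j \<le> n} = Sigma {..n} (\<lambda>i. {..n - i})"
    by auto
  also have "(\<Sum>(i, j)\<in>Sigma {..n} (\<lambda>i. {..n - i}). H i j) = (\<Sum>i\<le>n. \<Sum>j\<le>n - i. H i j)"
    by (rule sum.Sigma[symmetric]) auto
  also have "\<dots> = coeff (skew_mult \<alpha> p (skew_mult \<alpha> q r)) n"
    unfolding coeff_skew_mult alpha_pow_sum sum_distrib_left
    by (intro sum.cong refl) (simp add: H_def mult.assoc diff_diff_add)
  finally show "coeff (skew_mult \<alpha> (skew_mult \<alpha> p q) r) n = coeff (skew_mult \<alpha> p (skew_mult \<alpha> q r)) n" .
qed

end

section \<open>Right ideals and quotient modules\<close>

lemma right_ideal_diff: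
  assumes "right_ideal \<alpha> J" "x \<in> J" "y \<in> J"
  shows "x - y \<in> J"
  using assms unfolding right_ideal_def diff_conv_add_uminus by blast

lemma right_ideal_diff_imp_mem_iff:
  assumes J: "right_ideal \<alpha> J" and d: "x - y \<in> J"
  shows "x \<in> J \<longleftrightarrow> y \<in> J"
proof
  assume "x \<in> J"
  then show "y \<in> J" using right_ideal_diff[OF J \<open>x \<in> J\<close> d] by simp
next
  assume "y \<in> J"
  then have "(x - y) + y \<in> J" using J d unfolding right_ideal_def by blast
  then show "x \<in> J" by simp
qed

lemma coset_eq_iff:
  assumes J: "right_ideal \<alpha> J"
  shows "coset J x = J \<longleftrightarrow> x \<in> J"
proof
  assume "coset J x = J"
  moreover have "x \<in> coset J x"
    using J unfolding coset_def right_ideal_def by (metis add_0_right image_eqI)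
  ultimately show "x \<in> J" by simp
next
  assume x: "x \<in> J"
  show "coset J x = J"
  proof
    show "coset J x \<subseteq> J"
      using J x unfolding coset_def right_ideal_def by blast
    show "J \<subseteq> coset J x"
    proof
      fix m assume "m \<in> J"
      then have "m - x \<in> J" using right_ideal_diff[OF J _ x] by blast
      then show "m \<in> coset J x" unfolding coset_def by (auto intro: image_eqI[of _ _ "m - x"])
    qed
  qed
qed

lemma quot_add_coset:
  assumes J: "right_ideal \<alpha> J"
  shows "quot_add (coset J x) (coset J y) = coset J (x + y)"
proof
  show "quot_add (coset J x) (coset J y) \<subseteq> coset J (x + y)"
  proof
    fix z assume "z \<in> quot_add (coset J x) (coset J y)"
    then obtain m n where "m \<in> J" "n \<in> J" "z = (x + m) + (y + n)"
      unfolding quot_add_def coset_def by blast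
    moreover from this have "m + n \<in> J" using J unfolding right_ideal_def by blast
    ultimately show "z \<in> coset J (x + y)"
      unfolding coset_def by (auto simp: algebra_simps intro!: image_eqI[of _ _ "m + n"])
  qed
  show "coset J (x + y) \<subseteq> quot_add (coset J x) (coset J y)"
  proof
    fix z assume "z \<in> coset J (x + y)"
    then obtain m where "m \<in> J" "z = (x + m) + (y + 0)" unfolding coset_def by auto
    moreover have "0 \<in> J" using J unfolding right_ideal_def by blast
    ultimately show "z \<in> quot_add (coset J x) (coset J y)"
      unfolding quot_add_def coset_def by blast
  qed
qed

lemma quot_neg_coset:
  assumes J: "right_ideal \<alpha> J"
  shows "quot_neg (coset J x) = coset J (- x)"
proof -
  have "uminus ` J = J"
    using J unfolding right_ideal_def by (auto intro: image_eqI[of _ _ "- _"])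
  then have "(\<lambda>m. - (x + m)) ` J = (\<lambda>m. - x + m) ` J"
    by (metis (no_types, lifting) image_cong image_image minus_add_distrib)
  then show ?thesis
    unfolding quot_neg_def coset_def by (simp add: image_image)
qed

context skew_poly_ring
begin

lemma right_ideal_principal: "right_ideal \<alpha> (principal_right_ideal \<alpha> p)"
  unfolding right_ideal_def principal_right_ideal_def
  by (auto simp: image_iff skew_mult_assoc simp flip: skew_mult_add_right)
    (metis skew_mult_0_right, metis skew_mult_minus_right)

lemma right_ideal_eq_UNIV_iff:
  assumes "right_ideal \<alpha> J"
  shows "J = UNIV \<longleftrightarrow> 1 \<in> J"
  using assms unfolding right_ideal_def by (metis UNIV_I UNIV_eq_I skew_mult_1_left)

lemma quot_act_coset:
  assumes J: "right_ideal \<alpha> J"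
  shows "quot_act \<alpha> J (coset J x) s = coset J (skew_mult \<alpha> x s)"
proof
  show "quot_act \<alpha> J (coset J x) s \<subseteq> coset J (skew_mult \<alpha> x s)"
  proof
    fix z assume "z \<in> quot_act \<alpha> J (coset J x) s"
    then obtain m n where mn: "m \<in> J" "n \<in> J" "z = skew_mult \<alpha> x s + (skew_mult \<alpha> m s + n)"
      unfolding quot_act_def coset_def by (auto simp: skew_mult_add_left)
    then have "skew_mult \<alpha> m s + n \<in> J" using J unfolding right_ideal_def by blast
    then show "z \<in> coset J (skew_mult \<alpha> x s)" unfolding coset_def using mn by blast
  qed
  show "coset J (skew_mult \<alpha> x s) \<subseteq> quot_act \<alpha> J (coset J x) s"
  proof
    fix z assume "z \<in> coset J (skew_mult \<alpha> x s)"
    moreover have "x \<in> coset J x"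
      using J unfolding coset_def right_ideal_def by (metis add_0_right image_eqI)
    ultimately show "z \<in> quot_act \<alpha> J (coset J x) s" unfolding quot_act_def coset_def by blast
  qed
qed

lemma quot_simple_if_maximal:
  assumes max: "maximal_right_ideal \<alpha> J"
  shows "quot_simple \<alpha> J"
  unfolding quot_simple_def
proof (intro conjI allI impI)
  have J: "right_ideal \<alpha> J" and "J \<noteq> UNIV"
    using max unfolding maximal_right_ideal_def by blast+
  then obtain x where "x \<notin> J" by blast
  then have "coset J x \<noteq> J" using coset_eq_iff[OF J] by blast
  then show "quot_mod J \<noteq> {J}" unfolding quot_mod_def by blast
  fix N assume N: "quot_submodule \<alpha> J N"
  define K where "K = {x. coset J x \<in> N}"
  have JN: "J \<in> N" and NJ: "N \<subseteq> quot_mod J"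
    using N unfolding quot_submodule_def by blast+
  have "right_ideal \<alpha> K"
    unfolding right_ideal_def
  proof (intro conjI ballI allI)
    have "coset J 0 = J" using J coset_eq_iff[OF J] unfolding right_ideal_def by blast
    then show "0 \<in> K" using JN unfolding K_def by simp
  next
    fix x y assume "x \<in> K" "y \<in> K"
    then show "x + y \<in> K"
      using N unfolding K_def quot_submodule_def by (metis mem_Collect_eq quot_add_coset[OF J])
  next
    fix x assume "x \<in> K"
    then show "- x \<in> K"
      using N unfolding K_def quot_submodule_def by (metis mem_Collect_eq quot_neg_coset[OF J])
  next
    fix x s assume "x \<in> K"
    then show "skew_mult \<alpha> x s \<in> K"
      using N unfolding K_def quot_submodule_def by (metis mem_Collect_eq quot_act_coset[OF J])
  qed
  moreover have "J \<subseteq> K"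
  proof
    fix x assume "x \<in> J"
    then have "coset J x = J" using coset_eq_iff[OF J] by blast
    then show "x \<in> K" using JN unfolding K_def by simp
  qed
  ultimately have "K = J \<or> K = UNIV" using max unfolding maximal_right_ideal_def by blast
  then show "N = {J} \<or> N = quot_mod J"
  proof
    assume "K = J"
    then have "N \<subseteq> {J}"
      using NJ coset_eq_iff[OF J] unfolding K_def quot_mod_def by blast
    then show ?thesis using JN by blast
  next
    assume "K = UNIV"
    then show ?thesis using NJ unfolding quot_mod_def K_def by auto
  qed
qed

definition coeff_ideal :: "'a poly set \<Rightarrow> nat \<Rightarrow> 'a set" where
  "coeff_ideal J d = {y. monom y d \<in> J}"

lemma r_ideal_coeff_ideal:
  assumes J: "right_ideal \<alpha> J"
  shows "r_ideal (coeff_ideal J d)"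
  unfolding r_ideal_def coeff_ideal_def
proof (intro conjI ballI allI)
  fix r x assume "x \<in> {y. monom y d \<in> J}"
  moreover obtain s where s: "r = (\<alpha> ^^ d) s" by (rule alpha_pow_surj)
  ultimately have "skew_mult \<alpha> (monom x d) (monom s 0) \<in> J"
    using J unfolding right_ideal_def by blast
  then show "r * x \<in> {y. monom y d \<in> J}" by (simp add: skew_mult_monom_monom s mult.commute)
qed (use J in \<open>auto simp: right_ideal_def simp flip: add_monom minus_monom\<close>)

lemma coeff_ideal_mono:
  assumes "right_ideal \<alpha> J"
  shows "coeff_ideal J d \<subseteq> coeff_ideal J (Suc d)"
proof
  fix y assume "y \<in> coeff_ideal J d"
  then have "skew_mult \<alpha> (monom y d) (monom 1 1) \<in> J"
    using assms unfolding right_ideal_def coeff_ideal_def by blast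
  then show "y \<in> coeff_ideal J (Suc d)" by (simp add: skew_mult_monom_monom coeff_ideal_def)
qed

definition quot_annihilator :: "'a poly set \<Rightarrow> 'a poly set" where
  "quot_annihilator J = {s. \<forall>f. skew_mult \<alpha> f s \<in> J}"

lemma quot_faithful_iff:
  assumes J: "right_ideal \<alpha> J"
  shows "quot_faithful \<alpha> J \<longleftrightarrow> quot_annihilator J \<subseteq> {0}"
proof -
  have "(\<forall>C\<in>quot_mod J. quot_act \<alpha> J C s = J) \<longleftrightarrow> s \<in> quot_annihilator J" for s
    unfolding quot_mod_def quot_annihilator_def by (simp add: quot_act_coset[OF J] coset_eq_iff[OF J])
  then show ?thesis unfolding quot_faithful_def by blast
qed

lemma quot_annihilator_subset: "quot_annihilator J \<subseteq> J"
proof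
  fix s assume "s \<in> quot_annihilator J"
  then have "skew_mult \<alpha> 1 s \<in> J" unfolding quot_annihilator_def by blast
  then show "s \<in> J" by simp
qed

lemma quot_annihilator_mult_left: "s \<in> quot_annihilator J \<Longrightarrow> skew_mult \<alpha> g s \<in> quot_annihilator J"
  unfolding quot_annihilator_def by (simp flip: skew_mult_assoc)

lemma quot_annihilator_mult_right:
  assumes "right_ideal \<alpha> J" and "s \<in> quot_annihilator J"
  shows "skew_mult \<alpha> s g \<in> quot_annihilator J"
proof -
  have "skew_mult \<alpha> (skew_mult \<alpha> f s) g \<in> J" for f
    using assms unfolding quot_annihilator_def right_ideal_def by blast
  then show ?thesis unfolding quot_annihilator_def by (simp add: skew_mult_assoc)
qed

lemma quot_annihilator_diff:
  "right_ideal \<alpha> J \<Longrightarrow> s \<in> quot_annihilator J \<Longrightarrow> t \<in> quot_annihilator J \<Longrightarrow> s - t \<in> quot_annihilator J"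
  unfolding quot_annihilator_def by (simp add: skew_mult_diff_right right_ideal_diff)

text \<open>For a nonzero element of least degree in the annihilator of \<open>S/J\<close>, the commutator
  \<open>\<alpha>\<^sup>e(r) s - s r\<close> is again in the annihilator and has smaller degree, so it vanishes.\<close>
lemma quot_annihilator_min_degree_coeff:
  assumes J: "right_ideal \<alpha> J" and s: "s \<in> quot_annihilator J" "s \<noteq> 0"
    and min: "\<And>t. t \<in> quot_annihilator J \<Longrightarrow> t \<noteq> 0 \<Longrightarrow> degree s \<le> degree t"
  shows "coeff s n * ((\<alpha> ^^ degree s) r - (\<alpha> ^^ n) r) = 0"
proof -
  define e where "e = degree s"
  define t where "t = skew_mult \<alpha> (monom ((\<alpha> ^^ e) r) 0) s - skew_mult \<alpha> s (monom r 0)"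
  have coeff_t: "coeff t k = coeff s k * ((\<alpha> ^^ e) r - (\<alpha> ^^ k) r)" for k
    unfolding t_def by (simp add: coeff_skew_mult_monom_left coeff_skew_mult_const_right algebra_simps)
  have "t \<in> quot_annihilator J"
    unfolding t_def using s(1) J
    by (intro quot_annihilator_diff quot_annihilator_mult_left quot_annihilator_mult_right)
  moreover have "degree t < degree s" if "t \<noteq> 0"
  proof -
    have "degree t \<le> e" using coeff_t e_def by (intro degree_le) (simp add: coeff_eq_0)
    moreover have "coeff t e = 0" using coeff_t[of e] by simp
    ultimately show ?thesis using that e_def by (metis le_neq_implies_less leading_coeff_0_iff)
  qed
  ultimately have "t = 0" using min by fastforce
  then show ?thesis using coeff_t[of n] e_def by simp
qed

end

section \<open>The right ideal \<open>(1 - a\<theta>)S\<close>\<close>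

locale alpha_special_ring = skew_poly_ring \<alpha> for \<alpha> :: "'a::comm_ring_1 \<Rightarrow> 'a" +
  fixes a :: 'a
  assumes noetherian: "noetherian_ring TYPE('a)"
    and special: "alpha_special_element \<alpha> a"
begin

lemma normN_neq_0: "normN \<alpha> n a \<noteq> 0"
proof (cases n)
  case 0
  have "a \<noteq> 0" using special unfolding alpha_special_element_def by (metis le_refl normN_Suc_0 One_nat_def)
  then have "(1::'a) \<noteq> 0" by (metis mult_1 mult_zero_left)
  then show ?thesis using 0 by simp
next
  case (Suc m)
  then show ?thesis using special unfolding alpha_special_element_def by simp
qed

lemma one_mem_saturated_ideal:
  assumes I: "r_ideal I" and sat: "\<And>y. a * \<alpha> y \<in> I \<Longrightarrow> y \<in> I" and "I \<noteq> {0}"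
  shows "1 \<in> I"
proof -
  have "I \<subseteq> \<alpha> ` I"
  proof
    fix y assume "y \<in> I"
    obtain z where z: "y = \<alpha> z" using bij_alpha by (metis bij_pointE)
    then have "a * \<alpha> z \<in> I" using I \<open>y \<in> I\<close> unfolding r_ideal_def by auto
    then show "y \<in> \<alpha> ` I" using sat z by auto
  qed
  then have "alpha_stable \<alpha> I"
    using alpha_stable_if_subset_image[OF noetherian I] by blast
  then obtain n where "normN \<alpha> n a \<in> I"
    using special I \<open>I \<noteq> {0}\<close> unfolding alpha_special_element_def by blast
  then show "1 \<in> I"
    by (induct n) (auto simp: normN_Suc' intro: sat)
qed

lemma normN_mult_alpha_pow_eq_0_iff: "normN \<alpha> m a * (\<alpha> ^^ m) x = 0 \<longleftrightarrow> x = 0"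
proof
  assume x: "normN \<alpha> m a * (\<alpha> ^^ m) x = 0"
  define K where "K = {r. \<exists>m. normN \<alpha> m a * (\<alpha> ^^ m) r = 0}"
  have shift: "normN \<alpha> (k + m) a * (\<alpha> ^^ (k + m)) r = 0"
    if "normN \<alpha> m a * (\<alpha> ^^ m) r = 0" for k m r
    using arg_cong[OF that, of "\<lambda>z. normN \<alpha> k a * (\<alpha> ^^ k) z"]
    by (simp add: normN_add mult.assoc)
  have "r_ideal K"
    unfolding r_ideal_def
  proof (intro conjI ballI allI)
    fix x y assume "x \<in> K" "y \<in> K"
    then obtain m m' where "normN \<alpha> m a * (\<alpha> ^^ m) x = 0" "normN \<alpha> m' a * (\<alpha> ^^ m') y = 0"
      unfolding K_def by auto
    then have "normN \<alpha> (m' + m) a * (\<alpha> ^^ (m' + m)) (x + y) = 0"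
      using shift[of m x m'] shift[of m' y m] by (simp add: distrib_left add.commute)
    then show "x + y \<in> K" unfolding K_def by blast
  next
    fix r x assume "x \<in> K"
    then obtain m where "normN \<alpha> m a * (\<alpha> ^^ m) x = 0" unfolding K_def by auto
    moreover have "normN \<alpha> m a * (\<alpha> ^^ m) (r * x) = (\<alpha> ^^ m) r * (normN \<alpha> m a * (\<alpha> ^^ m) x)"
      by (simp add: ac_simps)
    ultimately have "normN \<alpha> m a * (\<alpha> ^^ m) (r * x) = 0" by simp
    then show "r * x \<in> K" unfolding K_def by blast
  qed (auto simp: K_def intro: exI[of _ 0])
  moreover have "y \<in> K" if y: "a * \<alpha> y \<in> K" for y
  proof -
    obtain m where "normN \<alpha> m a * (\<alpha> ^^ m) (a * \<alpha> y) = 0" using y unfolding K_def by blast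
    then have "normN \<alpha> (Suc m) a * (\<alpha> ^^ Suc m) y = 0"
      by (simp add: normN_Suc mult.assoc funpow_swap1)
    then show ?thesis unfolding K_def by blast
  qed
  moreover have "1 \<notin> K" unfolding K_def using normN_neq_0 by auto
  ultimately have "K = {0}" using one_mem_saturated_ideal by blast
  then show "x = 0" using x unfolding K_def by blast
qed simp

corollary a_mult_alpha_eq_0_iff: "a * \<alpha> y = 0 \<longleftrightarrow> y = 0"
  using normN_mult_alpha_pow_eq_0_iff[of 1 y] by simp

lemma alpha_pow_eq_if_annihilated:
  assumes "z \<noteq> 0" and "\<And>r. z * ((\<alpha> ^^ e) r - (\<alpha> ^^ i) r) = 0"
  shows "(\<alpha> ^^ e) r = (\<alpha> ^^ i) r"
proof -
  define Z where "Z = {z. \<forall>r. z * ((\<alpha> ^^ e) r - (\<alpha> ^^ i) r) = 0}"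
  have "r_ideal Z"
    unfolding r_ideal_def Z_def by (simp add: distrib_right mult.assoc)
  moreover have "y \<in> Z" if "a * \<alpha> y \<in> Z" for y
  proof -
    have "a * \<alpha> (y * ((\<alpha> ^^ e) s - (\<alpha> ^^ i) s)) = a * \<alpha> y * ((\<alpha> ^^ e) (\<alpha> s) - (\<alpha> ^^ i) (\<alpha> s))" for s
      by (simp add: funpow_swap1 mult.assoc)
    also have "\<dots> s = 0" for s using that unfolding Z_def by blast
    finally have "a * \<alpha> (y * ((\<alpha> ^^ e) s - (\<alpha> ^^ i) s)) = 0" for s .
    then show ?thesis unfolding Z_def using a_mult_alpha_eq_0_iff by blast
  qed
  moreover have "Z \<noteq> {0}" using assms unfolding Z_def by blast
  ultimately have "1 \<in> Z" by (rule one_mem_saturated_ideal)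
  then show ?thesis unfolding Z_def by simp
qed

abbreviation M :: "'a poly set" where
  "M \<equiv> principal_right_ideal \<alpha> (1 - smult a theta)"

lemma coeff_skew_mult_M_generator_0: "coeff (skew_mult \<alpha> (1 - smult a theta) g) 0 = coeff g 0"
  by (simp add: coeff_skew_mult theta_def)

lemma coeff_skew_mult_M_generator_Suc:
  "coeff (skew_mult \<alpha> (1 - smult a theta) g) (Suc n) = coeff g (Suc n) - a * \<alpha> (coeff g n)"
proof -
  have "coeff (skew_mult \<alpha> (1 - smult a theta) g) (Suc n) =
      (\<Sum>i\<le>Suc n. (if i = 0 then coeff g (Suc n) else 0) + (if i = 1 then - a * \<alpha> (coeff g n) else 0))"
    unfolding coeff_skew_mult by (intro sum.cong refl) (auto simp: theta_def coeff_monom)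
  then show ?thesis by (simp add: sum.distrib)
qed

text \<open>Since \<open>y \<theta>\<^sup>d \<equiv> a \<alpha>(y) \<theta>\<^sup>d\<^sup>+\<^sup>1\<close> modulo \<open>M\<close>, every \<open>f\<close> of degree at most \<open>d\<close> is congruent
  to \<open>residue f d \<theta>\<^sup>d\<close> (lemma \<open>sub_monom_residue_mem_M\<close>).\<close>
definition residue :: "'a poly \<Rightarrow> nat \<Rightarrow> 'a" where
  "residue f d = (\<Sum>i\<le>d. normN \<alpha> (d - i) a * (\<alpha> ^^ (d - i)) (coeff f i))"

lemma residue_0: "residue f 0 = coeff f 0"
  by (simp add: residue_def)

lemma residue_Suc: "residue f (Suc d) = coeff f (Suc d) + a * \<alpha> (residue f d)"
proof -
  have "residue f (Suc d) = coeff f (Suc d) + (\<Sum>i\<le>d. normN \<alpha> (Suc d - i) a * (\<alpha> ^^ (Suc d - i)) (coeff f i))"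
    unfolding residue_def by (simp add: add.commute)
  also have "(\<Sum>i\<le>d. normN \<alpha> (Suc d - i) a * (\<alpha> ^^ (Suc d - i)) (coeff f i)) = a * \<alpha> (residue f d)"
    unfolding residue_def sum_distrib_left alpha_pow_sum[of 1, simplified]
    by (intro sum.cong refl) (simp add: Suc_diff_le normN_Suc' mult.assoc)
  finally show ?thesis .
qed

lemma residue_diff: "residue (f - g) d = residue f d - residue g d"
  unfolding residue_def by (simp add: right_diff_distrib sum_subtractf)

lemma residue_monom: "e \<le> d \<Longrightarrow> residue (monom c e) d = normN \<alpha> (d - e) a * (\<alpha> ^^ (d - e)) c"
proof -
  assume "e \<le> d"
  have "residue (monom c e) d = (\<Sum>i\<le>d. if i = e then normN \<alpha> (d - e) a * (\<alpha> ^^ (d - e)) c else 0)"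
    unfolding residue_def by (intro sum.cong refl) (auto simp: coeff_monom)
  then show ?thesis using \<open>e \<le> d\<close> by simp
qed

lemma mem_M_iff: "f \<in> M \<longleftrightarrow> (\<exists>d\<ge>degree f. residue f d = 0)"
proof
  assume "f \<in> M"
  then obtain g where g: "f = skew_mult \<alpha> (1 - smult a theta) g"
    unfolding principal_right_ideal_def by auto
  have "residue f d = coeff g d" for d
    by (induct d) (simp_all add: residue_0 residue_Suc g coeff_skew_mult_M_generator_0
        coeff_skew_mult_M_generator_Suc)
  then show "\<exists>d\<ge>degree f. residue f d = 0"
    by (intro exI[of _ "degree f + Suc (degree g)"]) (simp add: coeff_eq_0)
next
  assume "\<exists>d\<ge>degree f. residue f d = 0"
  then obtain d where d: "degree f \<le> d" "residue f d = 0" by auto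
  define g where "g = (\<Sum>n\<le>d. monom (residue f n) n)"
  have coeff_g: "coeff g n = (if n \<le> d then residue f n else 0)" for n
    unfolding g_def coeff_sum by (simp add: coeff_monom)
  have "coeff (skew_mult \<alpha> (1 - smult a theta) g) n = coeff f n" for n
  proof (cases n)
    case (Suc m)
    then consider "Suc m \<le> d" | "d \<le> m" by linarith
    then show ?thesis
      using Suc d by cases (auto simp: coeff_skew_mult_M_generator_Suc coeff_g residue_Suc coeff_eq_0
          le_Suc_eq)
  qed (simp add: coeff_skew_mult_M_generator_0 coeff_g residue_0)
  then have "skew_mult \<alpha> (1 - smult a theta) g = f" by (rule poly_eqI)
  then show "f \<in> M" unfolding principal_right_ideal_def by (metis rangeI)
qed

lemma monom_diff_monom_shift_mem_M: "monom y d - monom (a * \<alpha> y) (Suc d) \<in> M"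
proof -
  have "coeff (skew_mult \<alpha> (1 - smult a theta) (monom y d)) n =
      coeff (monom y d - monom (a * \<alpha> y) (Suc d)) n" for n
    by (cases n) (auto simp: coeff_skew_mult_M_generator_0 coeff_skew_mult_M_generator_Suc coeff_monom)
  then have "skew_mult \<alpha> (1 - smult a theta) (monom y d) = monom y d - monom (a * \<alpha> y) (Suc d)"
    by (rule poly_eqI)
  then show ?thesis unfolding principal_right_ideal_def by (metis rangeI)
qed

lemma monom_diff_monom_shifts_mem_M: "monom y d - monom (normN \<alpha> k a * (\<alpha> ^^ k) y) (d + k) \<in> M"
proof (induct k)
  case (Suc k)
  have "monom y d - monom (normN \<alpha> (Suc k) a * (\<alpha> ^^ Suc k) y) (d + Suc k) =
      (monom y d - monom (normN \<alpha> k a * (\<alpha> ^^ k) y) (d + k)) +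
      (monom (normN \<alpha> k a * (\<alpha> ^^ k) y) (d + k) - monom (a * \<alpha> (normN \<alpha> k a * (\<alpha> ^^ k) y)) (Suc (d + k)))"
    by (simp add: normN_Suc' mult.assoc funpow_swap1)
  then show ?case
    using Suc monom_diff_monom_shift_mem_M right_ideal_principal unfolding right_ideal_def by metis
qed (use right_ideal_principal in \<open>simp add: right_ideal_def\<close>)

lemma sub_monom_residue_mem_M:
  assumes "degree f \<le> d"
  shows "f - monom (residue f d) d \<in> M"
proof -
  have "degree (f - monom (residue f d) d) \<le> d"
    using assms by (meson degree_diff_le degree_monom_le)
  then show ?thesis unfolding mem_M_iff by (auto simp: residue_diff residue_monom)
qed

lemma monom_notin_M: "c \<noteq> 0 \<Longrightarrow> monom c e \<notin> M"
  unfolding mem_M_iff by (auto simp: residue_monom degree_monom_eq normN_mult_alpha_pow_eq_0_iff)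

lemma coeff_ideal_shift_iff:
  assumes J: "right_ideal \<alpha> J" and "M \<subseteq> J"
  shows "y \<in> coeff_ideal J d \<longleftrightarrow> a * \<alpha> y \<in> coeff_ideal J (Suc d)"
  using right_ideal_diff_imp_mem_iff[OF J] monom_diff_monom_shift_mem_M assms(2)
  unfolding coeff_ideal_def by blast

lemma maximal_right_ideal_M: "maximal_right_ideal \<alpha> M"
  unfolding maximal_right_ideal_def
proof (intro conjI allI impI)
  show "right_ideal \<alpha> M" by (rule right_ideal_principal)
  show "M \<noteq> UNIV" using monom_notin_M[of 1 0] by (auto simp: one_poly_eq_simps)
  fix J assume "right_ideal \<alpha> J \<and> M \<subseteq> J"
  then have J: "right_ideal \<alpha> J" and MJ: "M \<subseteq> J" by auto
  show "J = M \<or> J = UNIV"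
  proof (cases "J = M")
    case False
    with MJ obtain f where f: "f \<in> J" "f \<notin> M" by blast
    obtain D where D: "\<forall>n\<ge>D. coeff_ideal J n = coeff_ideal J D"
      using noetherian r_ideal_coeff_ideal[OF J] coeff_ideal_mono[OF J]
      unfolding noetherian_ring_def by blast
    define d where "d = max (degree f) D"
    have "monom (residue f d) d \<in> J"
      using right_ideal_diff_imp_mem_iff[OF J] sub_monom_residue_mem_M[of f d] MJ f(1) d_def by auto
    moreover have "residue f d \<noteq> 0" using mem_M_iff f(2) d_def by auto
    ultimately have "coeff_ideal J D \<noteq> {0}"
      using D d_def unfolding coeff_ideal_def by (metis max.cobounded2 mem_Collect_eq singletonD)
    moreover have "y \<in> coeff_ideal J D" if "a * \<alpha> y \<in> coeff_ideal J D" for y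
      using that coeff_ideal_shift_iff[OF J MJ] D by (metis le_SucI order_refl)
    ultimately have "1 \<in> coeff_ideal J D"
      using one_mem_saturated_ideal r_ideal_coeff_ideal[OF J] by blast
    then have "normN \<alpha> D a * 1 \<in> coeff_ideal J D"
      using r_ideal_coeff_ideal[OF J] unfolding r_ideal_def by blast
    then have "monom 1 0 \<in> J"
      using right_ideal_diff_imp_mem_iff[OF J] monom_diff_monom_shifts_mem_M[of 1 0 D] MJ
      unfolding coeff_ideal_def by auto
    then show ?thesis using right_ideal_eq_UNIV_iff[OF J] by (simp add: one_poly_eq_simps)
  qed simp
qed

lemma lower_coeff_nonzero_if_mem_M:
  assumes "s \<in> M" "s \<noteq> 0"
  shows "\<exists>i<degree s. coeff s i \<noteq> 0"
proof (rule ccontr)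
  assume lower: "\<not> (\<exists>i<degree s. coeff s i \<noteq> 0)"
  have "coeff s n = coeff (monom (lead_coeff s) (degree s)) n" for n
    using lower by (cases n "degree s" rule: linorder_cases) (auto simp: coeff_monom coeff_eq_0)
  then have "s = monom (lead_coeff s) (degree s)" by (rule poly_eqI)
  moreover have "lead_coeff s \<noteq> 0" using assms(2) by simp
  ultimately show False using monom_notin_M assms(1) by metis
qed

lemma quot_faithful_M:
  assumes infinite_order: "\<forall>n>0. \<alpha> ^^ n \<noteq> id"
  shows "quot_faithful \<alpha> M"
  unfolding quot_faithful_iff[OF right_ideal_principal]
proof (rule ccontr)
  assume "\<not> quot_annihilator M \<subseteq> {0}"
  then obtain s0 where "s0 \<in> quot_annihilator M \<and> s0 \<noteq> 0" by blast
  then obtain s where s: "s \<in> quot_annihilator M" "s \<noteq> 0"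
    and min: "\<And>t. t \<in> quot_annihilator M \<Longrightarrow> t \<noteq> 0 \<Longrightarrow> degree s \<le> degree t"
    using ex_has_least_nat[of "\<lambda>t. t \<in> quot_annihilator M \<and> t \<noteq> 0" s0 degree] by blast
  define e where "e = degree s"
  obtain i where i: "i < e" "coeff s i \<noteq> 0"
    using lower_coeff_nonzero_if_mem_M s quot_annihilator_subset e_def by blast
  have eq: "(\<alpha> ^^ e) r = (\<alpha> ^^ i) r" for r
    using alpha_pow_eq_if_annihilated[OF i(2)]
      quot_annihilator_min_degree_coeff[OF right_ideal_principal s min] e_def by blast
  have "i + (e - i) = e" using i(1) by simp
  then have "(\<alpha> ^^ i) ((\<alpha> ^^ (e - i)) x) = (\<alpha> ^^ i) x" for x
    by (simp add: eq)
  then have "(\<alpha> ^^ (e - i)) x = x" for x by (simp only: alpha_pow_eq_iff)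
  then have "\<alpha> ^^ (e - i) = id" by (simp add: fun_eq_iff)
  then show False using infinite_order i(1) by simp
qed

end

theorem proposition4p3:
  fixes \<alpha> :: "'a::comm_ring_1 \<Rightarrow> 'a" and a :: 'a
  assumes "noetherian_ring TYPE('a)"
    and "ring_automorphism \<alpha>"
    and "alpha_special_element \<alpha> a"
  shows "maximal_right_ideal \<alpha> (principal_right_ideal \<alpha> (1 - smult a theta)) \<and>
         ((\<forall>n>0. \<alpha> ^^ n \<noteq> id) \<longrightarrow>
           quot_simple \<alpha> (principal_right_ideal \<alpha> (1 - smult a theta)) \<and>
           quot_faithful \<alpha> (principal_right_ideal \<alpha> (1 - smult a theta)))"
proof -
  interpret alpha_special_ring \<alpha> a
    using assms by unfold_locales
  show ?thesis
    using maximal_right_ideal_M quot_simple_if_maximal quot_faithful_M by blast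
qed

end
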